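(* Consider the fully discrete implicit variable-step BDF2 scheme described in the context and let $\{u^n\}_{n=0}^N$ be its solution. Suppose the time-step ratios satisfy $r_k\le r_s$ for $2\le k\le N$ and the time steps satisfy \[ \tau_n<4\delta\min\Big\{R_L(r_n,r_{n+1}),\ \frac{2+r_2}{1+r_2}\Big\},\qquad 1\le n\le N, \] where $R_L(z,s)=\frac{2+4z-z^{3/2}}{1+z}-\frac{s^{3/2}}{1+s}$ (with $r_1:=0$). Then \[ E^n\le\mathcal{E}^n\le\mathcal{E}^{n-1}\le E^0,\qquad 1\le n\le N, \] where $E^n=\frac{\delta}{2}\|\Delta_hu^n\|^2+\frac14\big\||\nabla_hu^n|^2-1\big\|^2$ for $n\ge0$, $\mathcal{E}^n=E^n+\frac{r_{n+1}^{3/2}}{2(1+r_{n+1})\tau_n}\|\nabla_\tau u^n\|^2$ for $n\ge1$, and $\mathcal E^0=E^0$.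
   Context: Let $L>0$, $\Omega=(0,L)^2$, $M$ a positive integer, $h=L/M$, $x_i=ih$, $y_j=jh$, $\Omega_h=\{(x_i,y_j):1\le i,j\le M\}$, $\bar\Omega_h=\{(x_i,y_j):0\le i,j\le M\}$, and $\mathbb{V}_h$ the space of grid functions on $\bar\Omega_h$ that are $L$-periodic in each direction. For $v\in\mathbb{V}_h$: $\delta_x v_{i+1/2,j}=(v_{i+1,j}-v_{ij})/h$, $\Delta_x v_{ij}=(v_{i+1,j}-v_{i-1,j})/(2h)$, $\delta_x^2 v_{ij}=(\delta_xv_{i+1/2,j}-\delta_xv_{i-1/2,j})/h$, and analogously in $y$; $\Delta_h=\delta_x^2+\delta_y^2$, $\nabla_h v_{ij}=(\Delta_x v_{ij},\Delta_y v_{ij})^T$, and for a vector grid function $\mathbf{g}=(g_1,g_2)$, $\nabla_h\cdot \mathbf g=\Delta_x g_1+\Delta_y g_2$. Inner product $\langle v,w\rangle=h^2\sum_{\mathrm{x}_h\in\Omega_h}v_hw_h$, $\|v\|=\sqrt{\langle v,v\rangle}$; $|\nabla_hu|$ is the pointwise Euclidean norm. Let $f(\mathbf{v})=(|\mathbf v|^2-1)\mathbf v$ and $\delta>0$. Time levels $0=t_0<t_1<\dots<t_N=T$, $\tau_n=t_n-t_{n-1}$, $r_n=\tau_n/\tau_{n-1}$ ($2\le n\le N$); $r_{N+1}\in(0,r_s]$ is an auxiliary ratio used for $n=N$. $\nabla_\tau v^n=v^n-v^{n-1}$. BDF2 kernels: $b_0^{(1)}=2/\tau_1$, and for $n\ge2$,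 $b_0^{(n)}=\frac{1+2r_n}{\tau_n(1+r_n)}$, $b_1^{(n)}=-\frac{r_n^2}{\tau_n(1+r_n)}$, $b_j^{(n)}=0$ for $j\ge2$; $D_2v^n=\sum_{k=1}^n b_{n-k}^{(n)}\nabla_\tau v^k$. The scheme is: $D_2u_h^n+\delta\Delta_h^2u_h^n-\nabla_h\cdot f(\nabla_hu_h^n)=0$ for $\mathrm{x}_h\in\Omega_h$, $1\le n\le N$, with $u_h^0=\varphi_0(\mathrm{x}_h)-\frac{\tau_1}{2}\varphi_1(\mathrm{x}_h)$, $\varphi_1=\nabla\cdot f(\nabla\varphi_0)-\delta\Delta^2\varphi_0$ for given periodic smooth data $\varphi_0\in H^4(\Omega)$. $r_s$ is a fixed constant with $0<r_s<4.864$. *)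

theory Defs
  imports "HOL-Analysis.Analysis"
begin

text \<open>Grid functions are represented as maps \<open>int \<Rightarrow> int \<Rightarrow> real\<close>;
  the value at index (i,j) is the value at the grid point (i h, j h).\<close>

type_synonym grid = "int \<Rightarrow> int \<Rightarrow> real"

definition periodic_grid :: "nat \<Rightarrow> grid \<Rightarrow> bool" where
  "periodic_grid M v \<longleftrightarrow> (\<forall>i j. v (i + int M) j = v i j \<and> v i (j + int M) = v i j)"

definition mesh :: "real \<Rightarrow> nat \<Rightarrow> real" where
  "mesh L M = L / real M"

(* forward difference: delta_x v_{i+1/2,j} is stored at index i *)
definition dfx :: "real \<Rightarrow> grid \<Rightarrow> grid" where
  "dfx h v i j = (v (i + 1) j - v i j) / h"
definition dfy :: "real \<Rightarrow> grid \<Rightarrow> grid" where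
  "dfy h v i j = (v i (j + 1) - v i j) / h"

definition Dcx :: "real \<Rightarrow> grid \<Rightarrow> grid" where
  "Dcx h v i j = (v (i + 1) j - v (i - 1) j) / (2 * h)"
definition Dcy :: "real \<Rightarrow> grid \<Rightarrow> grid" where
  "Dcy h v i j = (v i (j + 1) - v i (j - 1)) / (2 * h)"

definition d2x :: "real \<Rightarrow> grid \<Rightarrow> grid" where
  "d2x h v i j = (dfx h v i j - dfx h v (i - 1) j) / h"
definition d2y :: "real \<Rightarrow> grid \<Rightarrow> grid" where
  "d2y h v i j = (dfy h v i j - dfy h v i (j - 1)) / h"

definition lap_h :: "real \<Rightarrow> grid \<Rightarrow> grid" where
  "lap_h h v i j = d2x h v i j + d2y h v i j"

definition div_f_grad_h :: "real \<Rightarrow> grid \<Rightarrow> grid" where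
  "div_f_grad_h h v =
     (let g1 = (\<lambda>i j. ((Dcx h v i j)\<^sup>2 + (Dcy h v i j)\<^sup>2 - 1) * Dcx h v i j);
          g2 = (\<lambda>i j. ((Dcx h v i j)\<^sup>2 + (Dcy h v i j)\<^sup>2 - 1) * Dcy h v i j)
      in (\<lambda>i j. Dcx h g1 i j + Dcy h g2 i j))"

definition ip_h :: "real \<Rightarrow> nat \<Rightarrow> grid \<Rightarrow> grid \<Rightarrow> real" where
  "ip_h h M v w = h\<^sup>2 * (\<Sum>i\<in>{1..int M}. \<Sum>j\<in>{1..int M}. v i j * w i j)"
definition norm_h :: "real \<Rightarrow> nat \<Rightarrow> grid \<Rightarrow> real" where
  "norm_h h M v = sqrt (ip_h h M v v)"

definition energy_h :: "real \<Rightarrow> real \<Rightarrow> nat \<Rightarrow> grid \<Rightarrow> real" where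
  "energy_h \<delta> h M v =
     \<delta> / 2 * (norm_h h M (lap_h h v))\<^sup>2
     + 1 / 4 * (norm_h h M (\<lambda>i j. (Dcx h v i j)\<^sup>2 + (Dcy h v i j)\<^sup>2 - 1))\<^sup>2"

definition tstep :: "(nat \<Rightarrow> real) \<Rightarrow> nat \<Rightarrow> real" where
  "tstep t n = t n - t (n - 1)"

definition ratio :: "(nat \<Rightarrow> real) \<Rightarrow> nat \<Rightarrow> real \<Rightarrow> nat \<Rightarrow> real" where
  "ratio t N rN1 n =
     (if n \<le> 1 then 0
      else if n = N + 1 then rN1
      else tstep t n / tstep t (n - 1))"

definition bdf2_kernel :: "(nat \<Rightarrow> real) \<Rightarrow> nat \<Rightarrow> real \<Rightarrow> nat \<Rightarrow> nat \<Rightarrow> real" where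
  "bdf2_kernel t N rN1 n j =
     (if n = 1 then (if j = 0 then 2 / tstep t 1 else 0)
      else (let r = ratio t N rN1 n; \<tau> = tstep t n in
            if j = 0 then (1 + 2 * r) / (\<tau> * (1 + r))
            else if j = 1 then - (r\<^sup>2) / (\<tau> * (1 + r))
            else 0))"

definition D2 :: "(nat \<Rightarrow> real) \<Rightarrow> nat \<Rightarrow> real \<Rightarrow> (nat \<Rightarrow> grid) \<Rightarrow> nat \<Rightarrow> grid" where
  "D2 t N rN1 u n i j =
     (\<Sum>k\<in>{1..n}. bdf2_kernel t N rN1 n (n - k) * (u k i j - u (k - 1) i j))"

definition R_L :: "real \<Rightarrow> real \<Rightarrow> real" where
  "R_L z s = (2 + 4 * z - z powr (3/2)) / (1 + z) - s powr (3/2) / (1 + s)"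

definition mod_energy :: "real \<Rightarrow> real \<Rightarrow> nat \<Rightarrow> (nat \<Rightarrow> real) \<Rightarrow> nat \<Rightarrow> real
                           \<Rightarrow> (nat \<Rightarrow> grid) \<Rightarrow> nat \<Rightarrow> real" where
  "mod_energy \<delta> h M t N rN1 u n =
     (if n = 0 then energy_h \<delta> h M (u 0)
      else energy_h \<delta> h M (u n)
        + (ratio t N rN1 (n + 1)) powr (3/2)
            / (2 * (1 + ratio t N rN1 (n + 1)) * tstep t n)
          * (norm_h h M (\<lambda>i j. u n i j - u (n - 1) i j))\<^sup>2)"

definition pdx :: "(real \<Rightarrow> real \<Rightarrow> real) \<Rightarrow> real \<Rightarrow> real \<Rightarrow> real" where
  "pdx \<phi> x y = deriv (\<lambda>s. \<phi> s y) x"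
definition pdy :: "(real \<Rightarrow> real \<Rightarrow> real) \<Rightarrow> real \<Rightarrow> real \<Rightarrow> real" where
  "pdy \<phi> x y = deriv (\<lambda>s. \<phi> x s) y"

definition lap_c :: "(real \<Rightarrow> real \<Rightarrow> real) \<Rightarrow> real \<Rightarrow> real \<Rightarrow> real" where
  "lap_c \<phi> = (\<lambda>x y. pdx (pdx \<phi>) x y + pdy (pdy \<phi>) x y)"

definition phi1 :: "real \<Rightarrow> (real \<Rightarrow> real \<Rightarrow> real) \<Rightarrow> real \<Rightarrow> real \<Rightarrow> real" where
  "phi1 \<delta> \<phi> =
     (let g1 = (\<lambda>x y. ((pdx \<phi> x y)\<^sup>2 + (pdy \<phi> x y)\<^sup>2 - 1) * pdx \<phi> x y);
          g2 = (\<lambda>x y. ((pdx \<phi> x y)\<^sup>2 + (pdy \<phi> x y)\<^sup>2 - 1) * pdy \<phi> x y)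
      in (\<lambda>x y. pdx g1 x y + pdy g2 x y - \<delta> * lap_c (lap_c \<phi>) x y))"

end

theory Submission
  imports Defs
begin

text \<open>Test the scheme with the increment \<open>w\<^sup>n = u\<^sup>n - u\<^sup>n\<^sup>-\<^sup>1\<close>. Summation by parts on
  the periodic grid turns the biharmonic term into half the increment of \<open>\<parallel>\<Delta>\<^sub>h u\<parallel>\<^sup>2\<close>
  plus \<open>\<parallel>\<Delta>\<^sub>h w\<parallel>\<^sup>2/2\<close>, and, by an elementary inequality for the double well, the
  nonlinear term into the increment of \<open>\<parallel>|\<nabla>\<^sub>h u|\<^sup>2 - 1\<parallel>\<^sup>2/4\<close> up to a loss
  \<open>\<parallel>\<nabla>\<^sub>h w\<parallel>\<^sup>2/2\<close>. Since \<open>\<parallel>\<nabla>\<^sub>h w\<parallel>\<^sup>2 \<le> -\<langle>\<Delta>\<^sub>h w, w\<rangle> \<le> \<delta>\<parallel>\<Delta>\<^sub>h w\<parallel>\<^sup>2 + \<parallel>w\<parallel>\<^sup>2/(4\<delta>)\<close>,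
  this gives \<open>E\<^sup>n + \<langle>D\<^sub>2 u\<^sup>n, w\<^sup>n\<rangle> - \<parallel>w\<^sup>n\<parallel>\<^sup>2/(8\<delta>) \<le> E\<^sup>n\<^sup>-\<^sup>1\<close>.
  For the BDF2 kernels, AM-GM with weight \<open>sqrt r\<^sub>n\<close> gives pointwise
  \<open>2 w\<^sup>n D\<^sub>2 u\<^sup>n \<ge> (R\<^sub>L(r\<^sub>n, r\<^sub>n\<^sub>+\<^sub>1) + g(r\<^sub>n\<^sub>+\<^sub>1)) (w\<^sup>n)\<^sup>2/\<tau>\<^sub>n - g(r\<^sub>n) (w\<^sup>n\<^sup>-\<^sup>1)\<^sup>2/\<tau>\<^sub>n\<^sub>-\<^sub>1\<close>
  with \<open>g(r) = r\<^sup>3\<^sup>/\<^sup>2/(1 + r)\<close>. The step restriction \<open>\<tau>\<^sub>n < 4\<delta>R\<^sub>L\<close> lets the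
  \<open>R\<^sub>L\<close>-term absorb the loss \<open>\<parallel>w\<^sup>n\<parallel>\<^sup>2/(8\<delta>)\<close>, and the telescoping \<open>g\<close>-terms are exactly
  the correction in the modified energy, which therefore decreases.\<close>

section \<open>Sums over the periodic grid\<close>

definition grid_sum :: "nat \<Rightarrow> grid \<Rightarrow> real" where
  "grid_sum M f = (\<Sum>i\<in>{1..int M}. \<Sum>j\<in>{1..int M}. f i j)"

lemma grid_sum_add: "grid_sum M (\<lambda>i j. f i j + g i j) = grid_sum M f + grid_sum M g"
  by (simp add: grid_sum_def sum.distrib)

lemma grid_sum_diff: "grid_sum M (\<lambda>i j. f i j - g i j) = grid_sum M f - grid_sum M g"
  by (simp add: grid_sum_def sum_subtractf)

lemma grid_sum_uminus: "grid_sum M (\<lambda>i j. - f i j) = - grid_sum M f"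
  by (simp add: grid_sum_def sum_negf)

lemma grid_sum_mult_left: "grid_sum M (\<lambda>i j. c * f i j) = c * grid_sum M f"
  by (simp add: grid_sum_def sum_distrib_left)

lemma grid_sum_divide: "grid_sum M (\<lambda>i j. f i j / c) = grid_sum M f / c"
  by (simp add: grid_sum_def sum_divide_distrib)

lemma grid_sum_mono: "(\<And>i j. f i j \<le> g i j) \<Longrightarrow> grid_sum M f \<le> grid_sum M g"
  unfolding grid_sum_def by (intro sum_mono) auto

lemma grid_sum_nonneg: "(\<And>i j. 0 \<le> f i j) \<Longrightarrow> 0 \<le> grid_sum M f"
  unfolding grid_sum_def by (intro sum_nonneg) auto

lemma grid_sum_eq_zero:
  "(\<And>i j. 1 \<le> i \<Longrightarrow> i \<le> int M \<Longrightarrow> 1 \<le> j \<Longrightarrow> j \<le> int M \<Longrightarrow> f i j = 0) \<Longrightarrow> grid_sum M f = 0"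
  unfolding grid_sum_def by (intro sum.neutral ballI) auto

lemma ip_h_eq_grid_sum: "ip_h h M v w = h\<^sup>2 * grid_sum M (\<lambda>i j. v i j * w i j)"
  by (simp add: ip_h_def grid_sum_def)

lemma norm_h_power2: "(norm_h h M v)\<^sup>2 = h\<^sup>2 * grid_sum M (\<lambda>i j. (v i j)\<^sup>2)"
proof -
  have "0 \<le> ip_h h M v v"
    unfolding ip_h_eq_grid_sum by (simp add: grid_sum_nonneg)
  then show ?thesis
    by (simp add: norm_h_def ip_h_eq_grid_sum power2_eq_square)
qed

lemma energy_h_eq_grid_sum:
  "energy_h \<delta> h M v = h\<^sup>2 * (\<delta> / 2 * grid_sum M (\<lambda>i j. (lap_h h v i j)\<^sup>2)
     + grid_sum M (\<lambda>i j. ((Dcx h v i j)\<^sup>2 + (Dcy h v i j)\<^sup>2 - 1)\<^sup>2) / 4)"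
  by (simp add: energy_h_def norm_h_power2 algebra_simps)

lemma periodic_grid_shift:
  "periodic_grid M v \<Longrightarrow> periodic_grid M (\<lambda>i j. v (i + c) (j + d))"
  unfolding periodic_grid_def by (metis add.commute add.left_commute)

lemma periodic_grid_map2:
  "periodic_grid M a \<Longrightarrow> periodic_grid M b \<Longrightarrow> periodic_grid M (\<lambda>i j. F (a i j) (b i j))"
  by (simp add: periodic_grid_def)

lemma sum_periodic_shift:
  fixes f :: "int \<Rightarrow> real"
  assumes "\<And>i. f (i + int M) = f i"
  shows "(\<Sum>i\<in>{1..int M}. f (i + 1)) = (\<Sum>i\<in>{1..int M}. f i)"
proof (cases "M = 0")
  case False
  then have intervals:
      "{2..1 + int M} = insert (1 + int M) {2..int M}" "{1..int M} = insert 1 {2..int M}"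
    by auto
  have "(\<Sum>i\<in>{1..int M}. f (i + 1)) = (\<Sum>i\<in>{2..int M + 1}. f i)"
    by (rule sum.reindex_bij_witness[of _ "\<lambda>i. i - 1" "\<lambda>i. i + 1"]) auto
  also have "\<dots> = (\<Sum>i\<in>{1..int M}. f i)"
    using assms[of 1] by (simp add: intervals add.commute)
  finally show ?thesis .
qed simp

lemma grid_sum_shift_x:
  assumes "periodic_grid M f" shows "grid_sum M (\<lambda>i j. f (i + 1) j) = grid_sum M f"
  unfolding grid_sum_def using assms
  by (intro sum_periodic_shift[where f = "\<lambda>i. \<Sum>j\<in>{1..int M}. f i j"]) (simp add: periodic_grid_def)

lemma grid_sum_mult_shift_x:
  assumes "periodic_grid M a" "periodic_grid M b"
  shows "grid_sum M (\<lambda>i j. a i j * b (i + 1) j) = grid_sum M (\<lambda>i j. a (i - 1) j * b i j)"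
  using grid_sum_shift_x[OF periodic_grid_map2[OF periodic_grid_shift[OF assms(1), of "-1" 0] assms(2),
        of "(*)"]]
  by simp

lemma periodic_grid_dfx:
  assumes "periodic_grid M v" shows "periodic_grid M (dfx h v)"
  using periodic_grid_map2[OF periodic_grid_shift[OF assms, of 1 0]
      periodic_grid_shift[OF assms, of 0 0], of "\<lambda>x y. (x - y) / h"]
  by (simp add: dfx_def[abs_def])

lemma periodic_grid_d2x:
  assumes "periodic_grid M v" shows "periodic_grid M (d2x h v)"
  using periodic_grid_map2[OF periodic_grid_shift[OF periodic_grid_dfx[OF assms, of h], of 0 0]
      periodic_grid_shift[OF periodic_grid_dfx[OF assms, of h], of "-1" 0], of "\<lambda>x y. (x - y) / h"]
  by (simp add: d2x_def[abs_def])

lemma periodic_grid_Dcx: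
  assumes "periodic_grid M v" shows "periodic_grid M (Dcx h v)"
  using periodic_grid_map2[OF periodic_grid_shift[OF assms, of 1 0]
      periodic_grid_shift[OF assms, of "-1" 0], of "\<lambda>x y. (x - y) / (2 * h)"]
  by (simp add: Dcx_def[abs_def])

text \<open>The y-differences are x-differences of the transposed grid function, so the y-halves of the
  summation-by-parts identities follow from the x-halves by transposition.\<close>

definition grid_transpose :: "grid \<Rightarrow> grid" where
  "grid_transpose v i j = v j i"

lemma periodic_grid_transpose: "periodic_grid M v \<Longrightarrow> periodic_grid M (grid_transpose v)"
  by (simp add: periodic_grid_def grid_transpose_def)

lemma grid_sum_transpose: "grid_sum M (\<lambda>i j. f j i) = grid_sum M f"
  unfolding grid_sum_def by (rule sum.swap)

lemma Dcy_eq_transpose: "Dcy h v = grid_transpose (Dcx h (grid_transpose v))"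
  by (simp add: fun_eq_iff Dcy_def Dcx_def grid_transpose_def)

lemma dfy_eq_transpose: "dfy h v = grid_transpose (dfx h (grid_transpose v))"
  by (simp add: fun_eq_iff dfy_def dfx_def grid_transpose_def)

lemma d2y_eq_transpose: "d2y h v = grid_transpose (d2x h (grid_transpose v))"
  by (simp add: fun_eq_iff d2y_def d2x_def dfy_def dfx_def grid_transpose_def)

lemma periodic_grid_Dcy: "periodic_grid M v \<Longrightarrow> periodic_grid M (Dcy h v)"
  by (simp add: Dcy_eq_transpose periodic_grid_transpose periodic_grid_Dcx)

lemma periodic_grid_lap_h:
  assumes "periodic_grid M v" shows "periodic_grid M (lap_h h v)"
proof -
  have "periodic_grid M (d2y h v)"
    by (simp add: d2y_eq_transpose periodic_grid_transpose periodic_grid_d2x assms)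
  with periodic_grid_d2x[OF assms] show ?thesis
    using periodic_grid_map2[of M "d2x h v" "d2y h v" "(+)"] by (simp add: lap_h_def[abs_def])
qed

section \<open>Summation by parts\<close>

lemma grid_sum_Dcx_mult:
  assumes a: "periodic_grid M a" and b: "periodic_grid M b"
  shows "grid_sum M (\<lambda>i j. Dcx h a i j * b i j) = - grid_sum M (\<lambda>i j. a i j * Dcx h b i j)"
proof -
  have "grid_sum M (\<lambda>i j. Dcx h a i j * b i j)
      = grid_sum M (\<lambda>i j. (b i j * a (i + 1) j - a (i - 1) j * b i j) / (2 * h))"
    by (intro arg_cong[where f = "grid_sum M"] ext) (simp add: Dcx_def algebra_simps)
  also have "\<dots> = grid_sum M (\<lambda>i j. (a i j * b (i - 1) j - a i j * b (i + 1) j) / (2 * h))"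
    unfolding grid_sum_divide grid_sum_diff
    by (simp add: grid_sum_mult_shift_x[OF a b] grid_sum_mult_shift_x[OF b a] mult.commute)
  also have "\<dots> = - grid_sum M (\<lambda>i j. a i j * Dcx h b i j)"
    unfolding grid_sum_uminus[symmetric]
    by (intro arg_cong[where f = "grid_sum M"] ext) 
      (simp add: Dcx_def algebra_simps minus_divide_left)
  finally show ?thesis .
qed

lemma grid_sum_d2x_mult:
  assumes a: "periodic_grid M a" and b: "periodic_grid M b"
  shows "grid_sum M (\<lambda>i j. d2x h a i j * b i j) = - grid_sum M (\<lambda>i j. dfx h a i j * dfx h b i j)"
proof -
  have "grid_sum M (\<lambda>i j. d2x h a i j * b i j)
      = grid_sum M (\<lambda>i j. (dfx h a i j * b i j - dfx h a (i - 1) j * b i j) / h)"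
    by (intro arg_cong[where f = "grid_sum M"] ext) (simp add: d2x_def algebra_simps)
  also have "\<dots> = grid_sum M (\<lambda>i j. (dfx h a i j * b i j - dfx h a i j * b (i + 1) j) / h)"
    unfolding grid_sum_divide grid_sum_diff
    by (simp add: grid_sum_mult_shift_x[OF periodic_grid_dfx[OF a] b])
  also have "\<dots> = - grid_sum M (\<lambda>i j. dfx h a i j * dfx h b i j)"
    unfolding grid_sum_uminus[symmetric]
    by (intro arg_cong[where f = "grid_sum M"] ext)
      (simp add: dfx_def algebra_simps diff_divide_distrib add_divide_distrib)
  finally show ?thesis .
qed

lemma grid_sum_Dcx_power2_le:
  assumes w: "periodic_grid M w"
  shows "grid_sum M (\<lambda>i j. (Dcx h w i j)\<^sup>2) \<le> grid_sum M (\<lambda>i j. (dfx h w i j)\<^sup>2)"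
proof -
  have "grid_sum M (\<lambda>i j. (Dcx h w i j)\<^sup>2)
      \<le> grid_sum M (\<lambda>i j. ((dfx h w i j)\<^sup>2 + (dfx h w (i - 1) j)\<^sup>2) / 2)"
  proof (rule grid_sum_mono)
    fix i j
    have mean: "Dcx h w i j = (dfx h w i j + dfx h w (i - 1) j) / 2"
      by (simp add: Dcx_def dfx_def add_divide_distrib[symmetric])
    show "(Dcx h w i j)\<^sup>2 \<le> ((dfx h w i j)\<^sup>2 + (dfx h w (i - 1) j)\<^sup>2) / 2"
      unfolding mean using zero_le_power2[of "dfx h w i j - dfx h w (i - 1) j"]
      by (simp add: power2_eq_square field_simps)
  qed
  also have "\<dots> = grid_sum M (\<lambda>i j. (dfx h w i j)\<^sup>2)"
    using grid_sum_shift_x[OF periodic_grid_shift[OF periodic_grid_map2[OF periodic_grid_dfx[OF w, of h] w,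
        of "\<lambda>x y. x\<^sup>2"], of "-1" 0]]
    by (simp add: grid_sum_add grid_sum_divide)
  finally show ?thesis .
qed

lemma grid_sum_Dcy_mult:
  assumes a: "periodic_grid M a" and b: "periodic_grid M b"
  shows "grid_sum M (\<lambda>i j. Dcy h a i j * b i j) = - grid_sum M (\<lambda>i j. a i j * Dcy h b i j)"
  using grid_sum_Dcx_mult[OF periodic_grid_transpose[OF a] periodic_grid_transpose[OF b], of h]
    grid_sum_transpose[of M "\<lambda>i j. Dcx h (grid_transpose a) i j * grid_transpose b i j"]
    grid_sum_transpose[of M "\<lambda>i j. grid_transpose a i j * Dcx h (grid_transpose b) i j"]
  by (simp add: Dcy_eq_transpose grid_transpose_def)

lemma grid_sum_d2y_mult:
  assumes a: "periodic_grid M a" and b: "periodic_grid M b"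
  shows "grid_sum M (\<lambda>i j. d2y h a i j * b i j) = - grid_sum M (\<lambda>i j. dfy h a i j * dfy h b i j)"
  using grid_sum_d2x_mult[OF periodic_grid_transpose[OF a] periodic_grid_transpose[OF b], of h]
    grid_sum_transpose[of M "\<lambda>i j. d2x h (grid_transpose a) i j * grid_transpose b i j"]
    grid_sum_transpose[of M "\<lambda>i j. dfx h (grid_transpose a) i j * dfx h (grid_transpose b) i j"]
  by (simp add: d2y_eq_transpose dfy_eq_transpose grid_transpose_def)

lemma grid_sum_Dcy_power2_le:
  assumes w: "periodic_grid M w"
  shows "grid_sum M (\<lambda>i j. (Dcy h w i j)\<^sup>2) \<le> grid_sum M (\<lambda>i j. (dfy h w i j)\<^sup>2)"
  using grid_sum_Dcx_power2_le[OF periodic_grid_transpose[OF w], of h]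
    grid_sum_transpose[of M "\<lambda>i j. (Dcx h (grid_transpose w) i j)\<^sup>2"]
    grid_sum_transpose[of M "\<lambda>i j. (dfx h (grid_transpose w) i j)\<^sup>2"]
  by (simp add: Dcy_eq_transpose dfy_eq_transpose grid_transpose_def)

lemma grid_sum_lap_h_mult:
  assumes a: "periodic_grid M a" and b: "periodic_grid M b"
  shows "grid_sum M (\<lambda>i j. lap_h h a i j * b i j)
       = - (grid_sum M (\<lambda>i j. dfx h a i j * dfx h b i j)
            + grid_sum M (\<lambda>i j. dfy h a i j * dfy h b i j))"
  using grid_sum_d2x_mult[OF a b, of h] grid_sum_d2y_mult[OF a b, of h]
  by (simp add: lap_h_def distrib_right grid_sum_add)

lemma grid_sum_lap_h_mult_commute:
  assumes a: "periodic_grid M a" and b: "periodic_grid M b"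
  shows "grid_sum M (\<lambda>i j. lap_h h a i j * b i j) = grid_sum M (\<lambda>i j. a i j * lap_h h b i j)"
  using grid_sum_lap_h_mult[OF a b, of h] grid_sum_lap_h_mult[OF b a, of h]
  by (simp add: mult.commute)

section \<open>The energy inequality of the scheme\<close>

lemma Dcx_diff: "Dcx h (\<lambda>i j. a i j - b i j) i j = Dcx h a i j - Dcx h b i j"
  by (simp add: Dcx_def diff_divide_distrib)

lemma Dcy_diff: "Dcy h (\<lambda>i j. a i j - b i j) i j = Dcy h a i j - Dcy h b i j"
  by (simp add: Dcy_def diff_divide_distrib)

lemma lap_h_diff: "lap_h h (\<lambda>i j. a i j - b i j) i j = lap_h h a i j - lap_h h b i j"
  by (simp add: lap_h_def d2x_def d2y_def dfx_def dfy_def diff_divide_distrib add_divide_distrib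
      algebra_simps)

lemma double_well_increment_bound:
  fixes p q p' q' :: real
  shows "(p\<^sup>2 + q\<^sup>2 - 1) * p * (p - p') + (p\<^sup>2 + q\<^sup>2 - 1) * q * (q - q')
       \<ge> (p\<^sup>2 + q\<^sup>2 - 1)\<^sup>2 / 4 - (p'\<^sup>2 + q'\<^sup>2 - 1)\<^sup>2 / 4 - ((p - p')\<^sup>2 + (q - q')\<^sup>2) / 2"
proof -
  define s t c where "s = p\<^sup>2 + q\<^sup>2" and "t = p'\<^sup>2 + q'\<^sup>2" and "c = p * p' + q * q'"
  have identity: "(p\<^sup>2 + q\<^sup>2 - 1) * p * (p - p') + (p\<^sup>2 + q\<^sup>2 - 1) * q * (q - q')
      - ((p\<^sup>2 + q\<^sup>2 - 1)\<^sup>2 / 4 - (p'\<^sup>2 + q'\<^sup>2 - 1)\<^sup>2 / 4 - ((p - p')\<^sup>2 + (q - q')\<^sup>2) / 2)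
      = ((s - t)\<^sup>2 + 2 * s * (s + t - 2 * c)) / 4"
    unfolding s_def t_def c_def by (simp add: power2_eq_square field_simps)
  have "0 \<le> (p - p')\<^sup>2 + (q - q')\<^sup>2"
    by simp
  then have "0 \<le> s + t - 2 * c"
    unfolding s_def t_def c_def by (simp add: power2_eq_square algebra_simps)
  moreover have "0 \<le> s"
    unfolding s_def by simp
  ultimately have "0 \<le> ((s - t)\<^sup>2 + 2 * s * (s + t - 2 * c)) / 4"
    by simp
  with identity show ?thesis
    by linarith
qed

lemma neg_mult_le_young:
  fixes x y d :: real
  assumes "d > 0"
  shows "- (x * y) \<le> d * x\<^sup>2 + y\<^sup>2 / (4 * d)"
proof -
  have "d * x\<^sup>2 + y\<^sup>2 / (4 * d) + x * y = (2 * d * x + y)\<^sup>2 / (4 * d)"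
    using assms by (simp add: power2_eq_square field_simps)
  also have "\<dots> \<ge> 0"
    using assms by simp
  finally show ?thesis
    by linarith
qed

lemma grid_sum_lap_h_lap_h_increment:
  assumes a: "periodic_grid M a" and b: "periodic_grid M b"
  shows "grid_sum M (\<lambda>i j. lap_h h (lap_h h a) i j * (a i j - b i j))
       = (grid_sum M (\<lambda>i j. (lap_h h a i j)\<^sup>2) - grid_sum M (\<lambda>i j. (lap_h h b i j)\<^sup>2)
          + grid_sum M (\<lambda>i j. (lap_h h (\<lambda>i j. a i j - b i j) i j)\<^sup>2)) / 2"
proof -
  have "grid_sum M (\<lambda>i j. lap_h h (lap_h h a) i j * (a i j - b i j))
      = grid_sum M (\<lambda>i j. lap_h h a i j * lap_h h (\<lambda>i j. a i j - b i j) i j)"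
    by (rule grid_sum_lap_h_mult_commute[OF periodic_grid_lap_h[OF a] periodic_grid_map2[OF a b]])
  also have "\<dots> = grid_sum M (\<lambda>i j. ((lap_h h a i j)\<^sup>2 - (lap_h h b i j)\<^sup>2
                                  + (lap_h h (\<lambda>i j. a i j - b i j) i j)\<^sup>2) / 2)"
    by (intro arg_cong[where f = "grid_sum M"] ext)
      (simp add: lap_h_diff power2_eq_square field_simps)
  finally show ?thesis
    by (simp add: grid_sum_add grid_sum_diff grid_sum_divide)
qed

lemma grid_sum_div_f_grad_h_increment:
  assumes a: "periodic_grid M a" and b: "periodic_grid M b"
  shows "- grid_sum M (\<lambda>i j. div_f_grad_h h a i j * (a i j - b i j))
       \<ge> grid_sum M (\<lambda>i j. ((Dcx h a i j)\<^sup>2 + (Dcy h a i j)\<^sup>2 - 1)\<^sup>2) / 4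
         - grid_sum M (\<lambda>i j. ((Dcx h b i j)\<^sup>2 + (Dcy h b i j)\<^sup>2 - 1)\<^sup>2) / 4
         - (grid_sum M (\<lambda>i j. (Dcx h (\<lambda>i j. a i j - b i j) i j)\<^sup>2)
            + grid_sum M (\<lambda>i j. (Dcy h (\<lambda>i j. a i j - b i j) i j)\<^sup>2)) / 2"
proof -
  define w where "w = (\<lambda>i j. a i j - b i j)"
  define g1 where "g1 = (\<lambda>i j. ((Dcx h a i j)\<^sup>2 + (Dcy h a i j)\<^sup>2 - 1) * Dcx h a i j)"
  define g2 where "g2 = (\<lambda>i j. ((Dcx h a i j)\<^sup>2 + (Dcy h a i j)\<^sup>2 - 1) * Dcy h a i j)"
  have w: "periodic_grid M w"
    unfolding w_def by (rule periodic_grid_map2[OF a b])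
  have g1: "periodic_grid M g1" and g2: "periodic_grid M g2"
    unfolding g1_def g2_def
    by (rule periodic_grid_map2[OF periodic_grid_Dcx[OF a] periodic_grid_Dcy[OF a]])+
  have "- grid_sum M (\<lambda>i j. div_f_grad_h h a i j * w i j)
      = - grid_sum M (\<lambda>i j. Dcx h g1 i j * w i j) - grid_sum M (\<lambda>i j. Dcy h g2 i j * w i j)"
    by (simp add: div_f_grad_h_def g1_def g2_def distrib_right grid_sum_add)
  also have "\<dots> = grid_sum M (\<lambda>i j. g1 i j * Dcx h w i j + g2 i j * Dcy h w i j)"
    by (simp add: grid_sum_Dcx_mult[OF g1 w] grid_sum_Dcy_mult[OF g2 w] grid_sum_add)
  also have "\<dots> \<ge> grid_sum M (\<lambda>i j. ((Dcx h a i j)\<^sup>2 + (Dcy h a i j)\<^sup>2 - 1)\<^sup>2 / 4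
                     - ((Dcx h b i j)\<^sup>2 + (Dcy h b i j)\<^sup>2 - 1)\<^sup>2 / 4
                     - ((Dcx h w i j)\<^sup>2 + (Dcy h w i j)\<^sup>2) / 2)"
    unfolding w_def g1_def g2_def Dcx_diff Dcy_diff
    by (intro grid_sum_mono double_well_increment_bound)
  finally show ?thesis
    unfolding w_def by (simp add: grid_sum_add grid_sum_diff grid_sum_divide)
qed

lemma grid_sum_central_gradient_power2_le:
  assumes w: "periodic_grid M w" and \<delta>: "\<delta> > 0"
  shows "grid_sum M (\<lambda>i j. (Dcx h w i j)\<^sup>2) + grid_sum M (\<lambda>i j. (Dcy h w i j)\<^sup>2)
       \<le> \<delta> * grid_sum M (\<lambda>i j. (lap_h h w i j)\<^sup>2) + grid_sum M (\<lambda>i j. (w i j)\<^sup>2) / (4 * \<delta>)"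
proof -
  have "grid_sum M (\<lambda>i j. (Dcx h w i j)\<^sup>2) + grid_sum M (\<lambda>i j. (Dcy h w i j)\<^sup>2)
      \<le> grid_sum M (\<lambda>i j. (dfx h w i j)\<^sup>2) + grid_sum M (\<lambda>i j. (dfy h w i j)\<^sup>2)"
    using grid_sum_Dcx_power2_le[OF w] grid_sum_Dcy_power2_le[OF w] by (rule add_mono)
  also have "\<dots> = grid_sum M (\<lambda>i j. - (lap_h h w i j * w i j))"
    using grid_sum_lap_h_mult[OF w w, of h] by (simp add: grid_sum_uminus power2_eq_square)
  also have "\<dots> \<le> grid_sum M (\<lambda>i j. \<delta> * (lap_h h w i j)\<^sup>2 + (w i j)\<^sup>2 / (4 * \<delta>))"
    by (intro grid_sum_mono neg_mult_le_young \<delta>)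
  finally show ?thesis
    by (simp add: grid_sum_add grid_sum_mult_left grid_sum_divide)
qed

lemma scheme_energy_inequality:
  assumes a: "periodic_grid M a" and b: "periodic_grid M b" and \<delta>: "\<delta> > 0"
    and scheme: "\<And>i j. 1 \<le> i \<Longrightarrow> i \<le> int M \<Longrightarrow> 1 \<le> j \<Longrightarrow> j \<le> int M \<Longrightarrow>
        D i j + \<delta> * lap_h h (lap_h h a) i j - div_f_grad_h h a i j = 0"
  shows "energy_h \<delta> h M a + ip_h h M D (\<lambda>i j. a i j - b i j)
           - (norm_h h M (\<lambda>i j. a i j - b i j))\<^sup>2 / (8 * \<delta>)
         \<le> energy_h \<delta> h M b"
proof -
  define w where "w = (\<lambda>i j. a i j - b i j)"
  define G where "G v = grid_sum M (\<lambda>i j. ((Dcx h v i j)\<^sup>2 + (Dcy h v i j)\<^sup>2 - 1)\<^sup>2)" for v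
  define L where "L v = grid_sum M (\<lambda>i j. (lap_h h v i j)\<^sup>2)" for v
  define Q where "Q = grid_sum M (\<lambda>i j. lap_h h (lap_h h a) i j * w i j)"
  have tested: "grid_sum M (\<lambda>i j. D i j * w i j)
      = grid_sum M (\<lambda>i j. div_f_grad_h h a i j * w i j) - \<delta> * Q"
  proof -
    have "grid_sum M (\<lambda>i j. (D i j + \<delta> * lap_h h (lap_h h a) i j - div_f_grad_h h a i j) * w i j)
        = 0"
      by (rule grid_sum_eq_zero) (simp add: scheme)
    then show ?thesis
      by (simp add: Q_def algebra_simps grid_sum_add grid_sum_diff grid_sum_mult_left)
  qed
  have lap: "\<delta> * Q = \<delta> / 2 * L a - \<delta> / 2 * L b + \<delta> * L w / 2"
    unfolding Q_def L_def w_def grid_sum_lap_h_lap_h_increment[OF a b] by (simp add: field_simps)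
  define X W where "X = grid_sum M (\<lambda>i j. (Dcx h w i j)\<^sup>2) + grid_sum M (\<lambda>i j. (Dcy h w i j)\<^sup>2)"
    and "W = grid_sum M (\<lambda>i j. (w i j)\<^sup>2)"
  have nonlin: "grid_sum M (\<lambda>i j. div_f_grad_h h a i j * w i j) \<le> G b / 4 - G a / 4 + X / 2"
    using grid_sum_div_f_grad_h_increment[OF a b, of h] unfolding G_def X_def w_def by linarith
  have grad: "X \<le> \<delta> * L w + W / (4 * \<delta>)"
    unfolding L_def X_def W_def w_def
    by (rule grid_sum_central_gradient_power2_le[OF periodic_grid_map2[OF a b] \<delta>])
  have "grid_sum M (\<lambda>i j. D i j * w i j)
      \<le> G b / 4 - G a / 4 + X / 2 - (\<delta> / 2 * L a - \<delta> / 2 * L b + \<delta> * L w / 2)"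
    using tested lap nonlin by argo
  also have "\<dots> \<le> G b / 4 - G a / 4 + (\<delta> * L w + W / (4 * \<delta>)) / 2
        - (\<delta> / 2 * L a - \<delta> / 2 * L b + \<delta> * L w / 2)"
    using grad by argo
  also have "\<dots> = (\<delta> / 2 * L b + G b / 4) - (\<delta> / 2 * L a + G a / 4) + W / (8 * \<delta>)"
    by (simp add: field_simps)
  finally have "h\<^sup>2 * grid_sum M (\<lambda>i j. D i j * w i j)
      \<le> h\<^sup>2 * ((\<delta> / 2 * L b + G b / 4) - (\<delta> / 2 * L a + G a / 4) + W / (8 * \<delta>))"
    by (rule mult_left_mono) simp
  then show ?thesis
    unfolding energy_h_eq_grid_sum ip_h_eq_grid_sum norm_h_power2 w_def[symmetric]
      G_def[symmetric] L_def[symmetric] W_def[symmetric]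
    by (simp add: algebra_simps)
qed

section \<open>Variable-step BDF2 kernels\<close>

lemma bdf2_kernel_quadratic_bound:
  fixes r \<tau> \<tau>' x y :: real
  assumes \<tau>': "\<tau>' > 0" and r: "r > 0" and \<tau>: "\<tau> = r * \<tau>'"
  shows "2 * y * ((1 + 2 * r) / (\<tau> * (1 + r)) * y + - (r\<^sup>2) / (\<tau> * (1 + r)) * x)
       \<ge> (2 + 4 * r - r powr (3/2)) / (1 + r) * y\<^sup>2 / \<tau> - r powr (3/2) / (1 + r) * x\<^sup>2 / \<tau>'"
proof -
  have \<tau>_pos: "\<tau> > 0" and r1: "1 + r > 0"
    using r \<tau>' \<tau> by simp_all
  define \<sigma> where "\<sigma> = sqrt r"
  have \<sigma>: "\<sigma> > 0" "\<sigma>\<^sup>2 = r"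
    using r by (simp_all add: \<sigma>_def)
  have r32: "r powr (3/2) = r * \<sigma>"
  proof -
    have "r powr (3/2) = r powr (1 + 1/2)"
      by simp
    also have "\<dots> = r powr 1 * r powr (1/2)"
      by (rule powr_add)
    finally show ?thesis
      using r by (simp add: powr_half_sqrt \<sigma>_def)
  qed
  have "2 * r\<^sup>2 * (x * y) \<le> r * \<sigma> * (r * x\<^sup>2 + y\<^sup>2)"
  proof -
    have "0 \<le> r * \<sigma> * (\<sigma> * x - y)\<^sup>2"
      using r \<sigma> by simp
    also have "\<dots> = r * \<sigma> * (\<sigma>\<^sup>2 * x\<^sup>2 + y\<^sup>2) - 2 * \<sigma>\<^sup>2 * r * (x * y)"
      by (simp add: power2_eq_square algebra_simps)
    finally show ?thesis
      unfolding \<sigma>(2) by (simp add: power2_eq_square algebra_simps)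
  qed
  then have "((2 + 4 * r - r * \<sigma>) * y\<^sup>2 - r * (r * \<sigma>) * x\<^sup>2) / (\<tau> * (1 + r))
      \<le> (2 * (1 + 2 * r) * y\<^sup>2 - 2 * r\<^sup>2 * (x * y)) / (\<tau> * (1 + r))"
    using r \<tau>_pos by (intro divide_right_mono) (simp_all add: algebra_simps)
  also have "\<dots> = 2 * y * ((1 + 2 * r) / (\<tau> * (1 + r)) * y + - (r\<^sup>2) / (\<tau> * (1 + r)) * x)"
    by (simp add: diff_divide_distrib power2_eq_square algebra_simps)
  finally have "2 * y * ((1 + 2 * r) / (\<tau> * (1 + r)) * y + - (r\<^sup>2) / (\<tau> * (1 + r)) * x)
      \<ge> ((2 + 4 * r - r * \<sigma>) * y\<^sup>2 - r * (r * \<sigma>) * x\<^sup>2) / (\<tau> * (1 + r))" .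
  also have "((2 + 4 * r - r * \<sigma>) * y\<^sup>2 - r * (r * \<sigma>) * x\<^sup>2) / (\<tau> * (1 + r))
      = (2 + 4 * r - r powr (3/2)) / (1 + r) * y\<^sup>2 / \<tau> - r powr (3/2) / (1 + r) * x\<^sup>2 / \<tau>'"
    using r r1 \<tau>' unfolding r32 \<tau> by (simp add: divide_simps)
  finally show ?thesis .
qed

lemma D2_1: "D2 t N rN1 u 1 i j = 2 / tstep t 1 * (u 1 i j - u 0 i j)"
  by (simp add: D2_def bdf2_kernel_def)

lemma D2_ge_2:
  assumes "2 \<le> n"
  shows "D2 t N rN1 u n i j
       = (1 + 2 * ratio t N rN1 n) / (tstep t n * (1 + ratio t N rN1 n))
           * (u n i j - u (n - 1) i j)
         + - ((ratio t N rN1 n)\<^sup>2) / (tstep t n * (1 + ratio t N rN1 n))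
           * (u (n - 1) i j - u (n - 2) i j)"
proof -
  obtain m where m: "n = Suc (Suc m)"
    using assms by (metis add_2_eq_Suc le_Suc_ex)
  have "{1..n} = insert n (insert (n - 1) {1..m})"
    using m by auto
  moreover have "bdf2_kernel t N rN1 n (n - k) = 0" if "k \<in> {1..m}" for k
    using that m by (auto simp: bdf2_kernel_def Let_def)
  ultimately show ?thesis
    using m by (simp add: D2_def bdf2_kernel_def Let_def)
qed

text \<open>For \<open>n = 1\<close> the last term vanishes because \<open>r\<^sub>1 = 0\<close>, so the truncated index
  \<open>n - 2\<close> does no harm.\<close>

lemma D2_mult_increment_ge:
  assumes t_mono: "\<And>k. 1 \<le> k \<Longrightarrow> k \<le> N \<Longrightarrow> t (k - 1) < t k" and n: "1 \<le> n" "n \<le> N"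
  shows "2 * (u n i j - u (n - 1) i j) * D2 t N rN1 u n i j
       \<ge> (R_L (ratio t N rN1 n) s + s powr (3/2) / (1 + s))
             * (u n i j - u (n - 1) i j)\<^sup>2 / tstep t n
         - ratio t N rN1 n powr (3/2) / (1 + ratio t N rN1 n)
             * (u (n - 1) i j - u (n - 2) i j)\<^sup>2 / tstep t (n - 1)"
proof (cases "n = 1")
  case True
  have r1: "ratio t N rN1 1 = 0"
    by (simp add: ratio_def)
  have RL: "R_L 0 s + s powr (3/2) / (1 + s) = 2"
    by (simp add: R_L_def)
  have \<tau>: "tstep t 1 > 0"
    using t_mono[of 1] n by (simp add: tstep_def)
  have "2 * y * (2 / tstep t 1 * y) \<ge> 2 * y\<^sup>2 / tstep t 1" for y :: real
  proof -
    have "2 * y\<^sup>2 / tstep t 1 \<le> 4 * y\<^sup>2 / tstep t 1"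
      using \<tau> by (simp add: divide_right_mono)
    then show ?thesis
      by (simp add: power2_eq_square)
  qed
  from this[of "u 1 i j - u 0 i j"] show ?thesis
    unfolding True D2_1 r1 RL by simp
next
  case False
  then have n2: "2 \<le> n"
    using n by simp
  let ?r = "ratio t N rN1 n"
  have \<tau>: "tstep t n > 0" "tstep t (n - 1) > 0"
    using t_mono[of n] t_mono[of "n - 1"] n n2 by (simp_all add: tstep_def)
  have r: "?r = tstep t n / tstep t (n - 1)"
    using n n2 by (simp add: ratio_def)
  then have r_pos: "?r > 0" and \<tau>_eq: "tstep t n = ?r * tstep t (n - 1)"
    using \<tau> by simp_all
  have RL: "R_L ?r s + s powr (3/2) / (1 + s) = (2 + 4 * ?r - ?r powr (3/2)) / (1 + ?r)"
    by (simp add: R_L_def)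
  show ?thesis
    unfolding RL D2_ge_2[OF n2]
    by (rule bdf2_kernel_quadratic_bound[OF \<tau>(2) r_pos \<tau>_eq])
qed

lemma ip_h_D2_increment_ge:
  assumes t_mono: "\<And>k. 1 \<le> k \<Longrightarrow> k \<le> N \<Longrightarrow> t (k - 1) < t k" and n: "1 \<le> n" "n \<le> N"
  shows "2 * ip_h h M (D2 t N rN1 u n) (\<lambda>i j. u n i j - u (n - 1) i j)
       \<ge> (R_L (ratio t N rN1 n) s + s powr (3/2) / (1 + s))
             * (norm_h h M (\<lambda>i j. u n i j - u (n - 1) i j))\<^sup>2 / tstep t n
         - ratio t N rN1 n powr (3/2) / (1 + ratio t N rN1 n)
             * (norm_h h M (\<lambda>i j. u (n - 1) i j - u (n - 2) i j))\<^sup>2 / tstep t (n - 1)"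
proof -
  have "grid_sum M (\<lambda>i j. (R_L (ratio t N rN1 n) s + s powr (3/2) / (1 + s))
              * (u n i j - u (n - 1) i j)\<^sup>2 / tstep t n
          - ratio t N rN1 n powr (3/2) / (1 + ratio t N rN1 n)
              * (u (n - 1) i j - u (n - 2) i j)\<^sup>2 / tstep t (n - 1))
      \<le> grid_sum M (\<lambda>i j. 2 * (u n i j - u (n - 1) i j) * D2 t N rN1 u n i j)"
    (is "?lower \<le> ?upper")
    by (intro grid_sum_mono D2_mult_increment_ge[where t = t and N = N, OF t_mono n])
  then have "h\<^sup>2 * ?lower \<le> h\<^sup>2 * ?upper"
    by (rule mult_left_mono) simp
  then show ?thesis
    unfolding ip_h_eq_grid_sum norm_h_power2 grid_sum_diff grid_sum_divide grid_sum_mult_left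
      mult.assoc
    by (simp add: mult_ac right_diff_distrib)
qed

section \<open>Decay of the modified energy\<close>

lemma mod_energy_prev_eq:
  assumes "1 \<le> n"
  shows "mod_energy \<delta> h M t N rN1 u (n - 1) = energy_h \<delta> h M (u (n - 1))
           + ratio t N rN1 n powr (3/2) / (2 * (1 + ratio t N rN1 n) * tstep t (n - 1))
             * (norm_h h M (\<lambda>i j. u (n - 1) i j - u (n - 2) i j))\<^sup>2"
proof (cases "n = 1")
  case False
  then have "n - 1 \<noteq> 0" "n - 1 + 1 = n" "n - 1 - 1 = n - 2"
    using assms by simp_all
  then show ?thesis
    by (simp add: mod_energy_def)
qed (simp add: mod_energy_def ratio_def)

lemma energy_h_le_mod_energy:
  assumes "tstep t n > 0" and "ratio t N rN1 (n + 1) \<ge> 0"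
  shows "energy_h \<delta> h M (u n) \<le> mod_energy \<delta> h M t N rN1 u n"
  using assms by (simp add: mod_energy_def)

lemma mod_energy_le_prev:
  assumes \<delta>: "\<delta> > 0"
    and t_mono: "\<And>k. 1 \<le> k \<Longrightarrow> k \<le> N \<Longrightarrow> t (k - 1) < t k" and n: "1 \<le> n" "n \<le> N"
    and per: "periodic_grid M (u n)" "periodic_grid M (u (n - 1))"
    and scheme: "\<And>i j. 1 \<le> i \<Longrightarrow> i \<le> int M \<Longrightarrow> 1 \<le> j \<Longrightarrow> j \<le> int M \<Longrightarrow>
        D2 t N rN1 u n i j + \<delta> * lap_h h (lap_h h (u n)) i j - div_f_grad_h h (u n) i j = 0"
    and step: "tstep t n < 4 * \<delta> * R_L (ratio t N rN1 n) (ratio t N rN1 (n + 1))"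
  shows "mod_energy \<delta> h M t N rN1 u n \<le> mod_energy \<delta> h M t N rN1 u (n - 1)"
proof -
  define r \<rho> \<tau> \<tau>' where "r = ratio t N rN1 n" and "\<rho> = ratio t N rN1 (n + 1)"
    and "\<tau> = tstep t n" and "\<tau>' = tstep t (n - 1)"
  define W W' where "W = (norm_h h M (\<lambda>i j. u n i j - u (n - 1) i j))\<^sup>2"
    and "W' = (norm_h h M (\<lambda>i j. u (n - 1) i j - u (n - 2) i j))\<^sup>2"
  define I where "I = ip_h h M (D2 t N rN1 u n) (\<lambda>i j. u n i j - u (n - 1) i j)"
  have \<tau>_pos: "\<tau> > 0"
    using t_mono[OF n] by (simp add: \<tau>_def tstep_def)
  have energy: "energy_h \<delta> h M (u n) + I - W / (8 * \<delta>) \<le> energy_h \<delta> h M (u (n - 1))"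
    unfolding I_def W_def by (rule scheme_energy_inequality[OF per \<delta> scheme])
  define A B C where "A = R_L r \<rho> * W / \<tau>" and "B = \<rho> powr (3/2) / (1 + \<rho>) * W / \<tau>"
    and "C = r powr (3/2) / (1 + r) * W' / \<tau>'"
  have "2 * I \<ge> (R_L r \<rho> + \<rho> powr (3/2) / (1 + \<rho>)) * W / \<tau> - r powr (3/2) / (1 + r) * W' / \<tau>'"
    unfolding I_def W_def W'_def r_def \<rho>_def \<tau>_def \<tau>'_def
    by (rule ip_h_D2_increment_ge[where t = t and N = N, OF t_mono n])
  then have kernel: "2 * I \<ge> A + B - C"
    by (simp add: A_def B_def C_def distrib_right add_divide_distrib)
  have "\<tau> * W \<le> 4 * \<delta> * R_L r \<rho> * W"
    using step unfolding r_def \<rho>_def \<tau>_def[symmetric] W_def by (intro mult_right_mono) simp_all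
  then have coercive: "W / (8 * \<delta>) \<le> A / 2"
    using \<delta> \<tau>_pos by (simp add: A_def field_simps)
  have "mod_energy \<delta> h M t N rN1 u n = energy_h \<delta> h M (u n) + B / 2"
    using n unfolding B_def \<rho>_def \<tau>_def W_def by (simp add: mod_energy_def)
  moreover have "mod_energy \<delta> h M t N rN1 u (n - 1) = energy_h \<delta> h M (u (n - 1)) + C / 2"
    unfolding mod_energy_prev_eq[OF n(1)] C_def r_def \<tau>'_def W'_def by simp
  ultimately show ?thesis
    using energy kernel coercive by linarith
qed

theorem theorem2p2:
  fixes L \<delta> T rs rN1 :: real and M N :: nat
    and t :: "nat \<Rightarrow> real"
    and \<phi>0 :: "real \<Rightarrow> real \<Rightarrow> real"
    and u :: "nat \<Rightarrow> int \<Rightarrow> int \<Rightarrow> real"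
  defines "h \<equiv> mesh L M"
  assumes L_pos: "L > 0" and M_pos: "M > 0" and delta_pos: "\<delta> > 0"
    and rs: "0 < rs" "rs < 4.864"
    and t0: "t 0 = 0" and tN: "t N = T"
    and t_mono: "\<And>n. 1 \<le> n \<Longrightarrow> n \<le> N \<Longrightarrow> t (n - 1) < t n"
    and rN1: "0 < rN1" "rN1 \<le> rs"
    and phi0_per: "\<And>x y. \<phi>0 (x + L) y = \<phi>0 x y" "\<And>x y. \<phi>0 x (y + L) = \<phi>0 x y"
    and u_per: "\<And>n. n \<le> N \<Longrightarrow> periodic_grid M (u n)"
    and u_init: "\<And>i j. 0 \<le> i \<Longrightarrow> i \<le> int M \<Longrightarrow> 0 \<le> j \<Longrightarrow> j \<le> int M \<Longrightarrow>
        u 0 i j = \<phi>0 (real_of_int i * h) (real_of_int j * h)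
                  - tstep t 1 / 2 * phi1 \<delta> \<phi>0 (real_of_int i * h) (real_of_int j * h)"
    and scheme: "\<And>n i j. 1 \<le> n \<Longrightarrow> n \<le> N \<Longrightarrow> 1 \<le> i \<Longrightarrow> i \<le> int M \<Longrightarrow> 1 \<le> j \<Longrightarrow> j \<le> int M \<Longrightarrow>
        D2 t N rN1 u n i j + \<delta> * lap_h h (lap_h h (u n)) i j - div_f_grad_h h (u n) i j = 0"
    and ratio_bound: "\<And>k. 2 \<le> k \<Longrightarrow> k \<le> N \<Longrightarrow> ratio t N rN1 k \<le> rs"
    and step_bound: "\<And>n. 1 \<le> n \<Longrightarrow> n \<le> N \<Longrightarrow>
        tstep t n < 4 * \<delta> * min (R_L (ratio t N rN1 n) (ratio t N rN1 (n + 1)))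
                                 ((2 + ratio t N rN1 2) / (1 + ratio t N rN1 2))"
  shows "\<forall>n\<in>{1..N}.
           energy_h \<delta> h M (u n) \<le> mod_energy \<delta> h M t N rN1 u n
         \<and> mod_energy \<delta> h M t N rN1 u n \<le> mod_energy \<delta> h M t N rN1 u (n - 1)
         \<and> mod_energy \<delta> h M t N rN1 u (n - 1) \<le> energy_h \<delta> h M (u 0)"
proof -
  \<comment> \<open>Only the \<open>R\<^sub>L\<close> part of the step restriction enters.\<close>
  have ratio_next_pos: "ratio t N rN1 (n + 1) > 0" if "1 \<le> n" "n \<le> N" for n
    using that rN1(1) t_mono[of n] t_mono[of "n + 1"] by (auto simp: ratio_def tstep_def)
  have decreasing: "mod_energy \<delta> h M t N rN1 u n \<le> mod_energy \<delta> h M t N rN1 u (n - 1)"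
    if n: "1 \<le> n" "n \<le> N" for n
  proof (rule mod_energy_le_prev[where t = t and N = N, OF delta_pos t_mono n])
    show "tstep t n < 4 * \<delta> * R_L (ratio t N rN1 n) (ratio t N rN1 (n + 1))"
      using step_bound[OF n] delta_pos by (smt (verit) min.cobounded1 mult_left_mono)
  qed (use n u_per scheme in auto)
  have bounded: "mod_energy \<delta> h M t N rN1 u n \<le> energy_h \<delta> h M (u 0)" if "n \<le> N" for n
    using that
  proof (induction n)
    case (Suc m)
    then show ?case
      using decreasing[of "Suc m"] by simp
  qed (simp add: mod_energy_def)
  show ?thesis
    using energy_h_le_mod_energy ratio_next_pos t_mono decreasing bounded
    by (auto simp: tstep_def less_imp_le)
qed

end
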